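(* Let $0<\beta<\alpha$ and consider $\frac{dx}{dt}=-\alpha x+f(x,y)$, $\frac{dy}{dt}=\beta y+g(x,y)$, where $f,g$ are real analytic at $(0,0)$, vanish at $(0,0)$ together with their first partial derivatives, and are $C^4$ near a homoclinic solution $\ell(s)=(a(s),b(s))$ of $(0,0)$ which approaches $(0,0)$ along the positive $x$-axis direction as $s\to+\infty$ and along the positive $y$-axis direction as $s\to-\infty$. Let $h$ be continuous (indeed $C^4$) near $\ell$ and let $\omega\in\mathbb R$. Then the integrals $A=\int_{-\infty}^{\infty}(u(s)+v(s))h(a(s),b(s))e^{-\int_0^sE(\tau)d\tau}ds$, $C=\int_{-\infty}^{\infty}(u(s)+v(s))\cos(\omega s)e^{-\int_0^sE(\tau)d\tau}ds$, $S=\int_{-\infty}^{\infty}(u(s)+v(s))\sin(\omega s)e^{-\int_0^sE(\tau)d\tau}ds$ are absolutely convergent.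
   Context: $(u(s),v(s))=\|\ell'(s)\|^{-1}\ell'(s)$ is the unit tangent to $\ell$, and $E(s)=v^2(s)(-\alpha+\partial_xf(\ell(s)))+u^2(s)(\beta+\partial_yg(\ell(s)))-u(s)v(s)(\partial_yf(\ell(s))+\partial_xg(\ell(s)))$. *)

theory Defs
  imports "HOL-Analysis.Analysis"
begin

definition partial_x :: "(real \<times> real \<Rightarrow> real) \<Rightarrow> real \<times> real \<Rightarrow> real" where
  "partial_x F p = deriv (\<lambda>t. F (t, snd p)) (fst p)"

definition partial_y :: "(real \<times> real \<Rightarrow> real) \<Rightarrow> real \<times> real \<Rightarrow> real" where
  "partial_y F p = deriv (\<lambda>t. F (fst p, t)) (snd p)"

fun iter_partial :: "bool list \<Rightarrow> (real \<times> real \<Rightarrow> real) \<Rightarrow> real \<times> real \<Rightarrow> real" where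
  "iter_partial [] F = F"
| "iter_partial (b # bs) F = (if b then partial_y else partial_x) (iter_partial bs F)"

definition C_k_on :: "nat \<Rightarrow> (real \<times> real) set \<Rightarrow> (real \<times> real \<Rightarrow> real) \<Rightarrow> bool" where
  "C_k_on k U F \<longleftrightarrow>
     (\<forall>bs. length bs \<le> k \<longrightarrow> continuous_on U (iter_partial bs F)) \<and>
     (\<forall>bs. length bs < k \<longrightarrow> (\<forall>p\<in>U.
         (\<lambda>t. iter_partial bs F (t, snd p)) differentiable (at (fst p)) \<and>
         (\<lambda>t. iter_partial bs F (fst p, t)) differentiable (at (snd p))))"

text \<open>Real analyticity at a point: locally the sum of a convergent double power series
  (for real series, unconditional summation = absolute convergence).\<close>
definition real_analytic_at2 :: "(real \<times> real \<Rightarrow> real) \<Rightarrow> real \<times> real \<Rightarrow> bool" where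
  "real_analytic_at2 F p \<longleftrightarrow>
     (\<exists>r>0. \<exists>c :: nat \<times> nat \<Rightarrow> real. \<forall>x y. \<bar>x - fst p\<bar> < r \<and> \<bar>y - snd p\<bar> < r \<longrightarrow>
        ((\<lambda>(i, j). c (i, j) * (x - fst p) ^ i * (y - snd p) ^ j) has_sum F (x, y)) UNIV)"

definition oint :: "real \<Rightarrow> real \<Rightarrow> (real \<Rightarrow> real) \<Rightarrow> real" where
  "oint a b F = (if a \<le> b then integral {a..b} F else - integral {b..a} F)"

definition tan_u :: "(real \<Rightarrow> real \<times> real) \<Rightarrow> real \<Rightarrow> real" where
  "tan_u l s = fst (vector_derivative l (at s)) / norm (vector_derivative l (at s))"

definition tan_v :: "(real \<Rightarrow> real \<times> real) \<Rightarrow> real \<Rightarrow> real" where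
  "tan_v l s = snd (vector_derivative l (at s)) / norm (vector_derivative l (at s))"

definition E_fun :: "real \<Rightarrow> real \<Rightarrow> (real \<times> real \<Rightarrow> real) \<Rightarrow> (real \<times> real \<Rightarrow> real)
    \<Rightarrow> (real \<Rightarrow> real \<times> real) \<Rightarrow> real \<Rightarrow> real" where
  "E_fun \<alpha> \<beta> f g l s =
     (tan_v l s)\<^sup>2 * (- \<alpha> + partial_x f (l s))
     + (tan_u l s)\<^sup>2 * (\<beta> + partial_y g (l s))
     - tan_u l s * tan_v l s * (partial_y f (l s) + partial_x g (l s))"

end

theory Submission
  imports Defs
begin

(* Since f and g vanish at the origin together with their first derivatives, they are
   o(|p|) there. Along the orbit the velocity divided by |l s| therefore tends to (-\<alpha>, 0)
   as s \<rightarrow> +\<infinity> and to (0, \<beta>) as s \<rightarrow> -\<infinity>, so the unit tangent tends to (-1, 0) and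
   (0, 1), and E tends to \<beta> and -\<alpha> respectively. Hence oint 0 s E grows at least like
   (\<beta>/2)|s| - M in both directions and the weight exp (- oint 0 s E) decays exponentially,
   while u + v, h \<circ> l, cos and sin are bounded. *)

lemma C_k_on_continuous_partials:
  assumes "C_k_on k U F" "1 \<le> k"
  shows "continuous_on U F" "continuous_on U (partial_x F)" "continuous_on U (partial_y F)"
proof -
  have "continuous_on U (iter_partial bs F)" if "length bs \<le> 1" for bs
    using assms that unfolding C_k_on_def by auto
  from this[of "[]"] this[of "[False]"] this[of "[True]"]
  show "continuous_on U F" "continuous_on U (partial_x F)" "continuous_on U (partial_y F)"
    by simp_all
qed

lemma C_k_on_differentiable_sections:
  assumes "C_k_on k U F" "1 \<le> k" "(x, y) \<in> U"
  shows "(\<lambda>t. F (t, y)) differentiable (at x)" "(\<lambda>t. F (x, t)) differentiable (at y)"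
  using assms unfolding C_k_on_def
  by (metis fst_conv snd_conv iter_partial.simps(1) less_le_trans zero_less_one list.size(3))+

lemma abs_diff_le_of_deriv_bound:
  fixes \<phi> :: "real \<Rightarrow> real"
  assumes "\<And>t. \<bar>t\<bar> \<le> \<bar>x\<bar> \<Longrightarrow> \<phi> differentiable (at t)"
    and "\<And>t. \<bar>t\<bar> \<le> \<bar>x\<bar> \<Longrightarrow> \<bar>deriv \<phi> t\<bar> \<le> B"
  shows "\<bar>\<phi> x - \<phi> 0\<bar> \<le> B * \<bar>x\<bar>"
proof -
  have "\<bar>\<phi> x - \<phi> 0\<bar> \<le> B * \<bar>x - 0\<bar>"
  proof (rule field_differentiable_bound[of "{-\<bar>x\<bar>..\<bar>x\<bar>}" \<phi> "deriv \<phi>", simplified])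
    fix z assume "- \<bar>x\<bar> \<le> z \<and> z \<le> \<bar>x\<bar>"
    then have "\<bar>z\<bar> \<le> \<bar>x\<bar>" by linarith
    then show "(\<phi> has_real_derivative deriv \<phi> z) (at z within {- \<bar>x\<bar>..\<bar>x\<bar>})"
      "\<bar>deriv \<phi> z\<bar> \<le> B"
      using assms by (auto simp: DERIV_deriv_iff_real_differentiable intro: has_field_derivative_at_within)
  qed auto
  then show ?thesis by simp
qed

lemma C_k_on_small_near_origin:
  assumes U: "open U" "(0, 0) \<in> U" and C: "C_k_on k U F" "1 \<le> k"
    and F0: "F (0, 0) = 0" "partial_x F (0, 0) = 0" "partial_y F (0, 0) = 0" and e: "e > 0"
  shows "\<exists>d>0. \<forall>p. norm p < d \<longrightarrow> \<bar>F p\<bar> \<le> e * norm p"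
proof -
  note cont = C_k_on_continuous_partials[OF C] and diff = C_k_on_differentiable_sections[OF C]
  have "isCont (partial_x F) (0, 0)" "isCont (partial_y F) (0, 0)"
    using cont U continuous_on_eq_continuous_at by blast+
  then have "(partial_x F \<longlongrightarrow> 0) (nhds (0, 0))" "(partial_y F \<longlongrightarrow> 0) (nhds (0, 0))"
    using F0 by (simp_all add: tendsto_nhds_iff isCont_def)
  then have "\<forall>\<^sub>F p in nhds (0, 0). p \<in> U \<and> \<bar>partial_x F p\<bar> < e/2 \<and> \<bar>partial_y F p\<bar> < e/2"
    using U e by (intro eventually_conj eventually_nhds_in_open) (auto dest!: tendstoD[of _ 0 _ "e/2"])
  then obtain d where d: "d > 0"
    and near: "\<And>p. norm p < d \<Longrightarrow> p \<in> U \<and> \<bar>partial_x F p\<bar> < e/2 \<and> \<bar>partial_y F p\<bar> < e/2"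
    unfolding eventually_nhds_metric dist_norm by (force simp: zero_prod_def[symmetric])
  have "\<bar>F (x, y)\<bar> \<le> e * norm (x, y)" if xy: "norm (x, y) < d" for x y
  proof -
    have dx: "\<bar>F (x, y) - F (0, y)\<bar> \<le> e/2 * \<bar>x\<bar>"
    proof (rule abs_diff_le_of_deriv_bound)
      fix t assume "\<bar>t\<bar> \<le> \<bar>x\<bar>"
      then have "norm (t, y) \<le> norm (x, y)" by (simp add: norm_Pair abs_le_square_iff)
      then have "norm (t, y) < d" using xy by linarith
      then show "(\<lambda>t. F (t, y)) differentiable at t" "\<bar>deriv (\<lambda>t. F (t, y)) t\<bar> \<le> e/2"
        using near diff by (auto simp: partial_x_def less_imp_le)
    qed
    have dy: "\<bar>F (0, y) - F (0, 0)\<bar> \<le> e/2 * \<bar>y\<bar>"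
    proof (rule abs_diff_le_of_deriv_bound)
      fix t assume "\<bar>t\<bar> \<le> \<bar>y\<bar>"
      moreover have "norm (0::real, t) = \<bar>t\<bar>" by (simp add: norm_Pair)
      ultimately have "norm (0::real, t) < d"
        using xy norm_snd_le[of y x] unfolding real_norm_def by linarith
      then show "(\<lambda>t. F (0, t)) differentiable at t" "\<bar>deriv (\<lambda>t. F (0, t)) t\<bar> \<le> e/2"
        using near diff by (auto simp: partial_y_def less_imp_le)
    qed
    have "\<bar>F (x, y)\<bar> = \<bar>(F (x, y) - F (0, y)) + (F (0, y) - F (0, 0))\<bar>" using F0(1) by simp
    also have "\<dots> \<le> e/2 * \<bar>x\<bar> + e/2 * \<bar>y\<bar>"
      using abs_triangle_ineq dx dy by (rule order_trans[OF _ add_mono])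
    also have "\<dots> \<le> e/2 * (2 * norm (x, y))"
      unfolding distrib_left[symmetric] using e norm_fst_le[of x y] norm_snd_le[of y x]
      by (intro mult_left_mono) auto
    finally show ?thesis by simp
  qed
  then show ?thesis using d by auto
qed

lemma tendsto_div_norm_zero_of_C_k_on:
  assumes "open U" "(0, 0) \<in> U" "C_k_on k U F" "1 \<le> k"
    and "F (0, 0) = 0" "partial_x F (0, 0) = 0" "partial_y F (0, 0) = 0"
    and l: "(l \<longlongrightarrow> (0, 0)) G"
  shows "((\<lambda>s. F (l s) / norm (l s)) \<longlongrightarrow> 0) G"
proof (rule tendstoI)
  fix e :: real assume "e > 0"
  then obtain d where "d > 0" and d: "\<And>p. norm p < d \<Longrightarrow> \<bar>F p\<bar> \<le> e/2 * norm p"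
    using C_k_on_small_near_origin[OF assms(1-7), of "e/2"] by auto
  have "\<forall>\<^sub>F s in G. norm (l s) < d"
    using tendstoD[OF l \<open>d > 0\<close>] by (simp add: dist_norm zero_prod_def[symmetric])
  then show "\<forall>\<^sub>F s in G. dist (F (l s) / norm (l s)) 0 < e"
  proof (rule eventually_mono)
    fix s assume "norm (l s) < d"
    then have "\<bar>F (l s) / norm (l s)\<bar> \<le> e/2"
      using d \<open>e > 0\<close> by (cases "l s = 0") (auto simp: abs_divide divide_le_eq)
    then show "dist (F (l s) / norm (l s)) 0 < e"
      using \<open>e > 0\<close> by (simp only: dist_real_def diff_zero)
  qed
qed

lemma tan_eq_sgn_vector_derivative:
  "(tan_u l s, tan_v l s) = sgn (vector_derivative l (at s))"
  by (cases "vector_derivative l (at s)")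
    (simp add: tan_u_def tan_v_def sgn_div_norm scaleR_Pair divide_inverse_commute)

lemma unit_tangent_tendsto:
  fixes l :: "real \<Rightarrow> real \<times> real"
  assumes sol: "\<And>s. (l has_vector_derivative
                 (- \<alpha> * fst (l s) + f (l s), \<beta> * snd (l s) + g (l s))) (at s)"
    and U: "open U" "(0, 0) \<in> U" and C: "C_k_on k U f" "C_k_on k U g" "1 \<le> k"
    and f0: "f (0, 0) = 0" "partial_x f (0, 0) = 0" "partial_y f (0, 0) = 0"
    and g0: "g (0, 0) = 0" "partial_x g (0, 0) = 0" "partial_y g (0, 0) = 0"
    and lim: "(l \<longlongrightarrow> (0, 0)) G"
    and dir: "((\<lambda>s. l s /\<^sub>R norm (l s)) \<longlongrightarrow> (p1, p2)) G"
    and w: "(- \<alpha> * p1, \<beta> * p2) \<noteq> 0"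
  shows "((\<lambda>s. (tan_u l s, tan_v l s)) \<longlongrightarrow> sgn (- \<alpha> * p1, \<beta> * p2)) G"
proof -
  define V where "V s = vector_derivative l (at s) /\<^sub>R norm (l s)" for s
  have V_eq: "V s = (- \<alpha> * (fst (l s) / norm (l s)) + f (l s) / norm (l s),
                     \<beta> * (snd (l s) / norm (l s)) + g (l s) / norm (l s))" for s
    using vector_derivative_at[OF sol] by (simp add: V_def divide_inverse_commute algebra_simps)
  have "(V \<longlongrightarrow> (- \<alpha> * p1 + 0, \<beta> * p2 + 0)) G"
    unfolding V_eq using tendsto_fst[OF dir] tendsto_snd[OF dir]
    by (intro tendsto_Pair tendsto_add tendsto_mult_left
        tendsto_div_norm_zero_of_C_k_on[OF U C(1,3) f0 lim]
        tendsto_div_norm_zero_of_C_k_on[OF U C(2,3) g0 lim])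
      (simp_all add: divide_inverse_commute)
  then have "((\<lambda>s. sgn (V s)) \<longlongrightarrow> sgn (- \<alpha> * p1, \<beta> * p2)) G"
    using w by (intro tendsto_sgn) simp_all
  moreover have "\<forall>\<^sub>F s in G. l s \<noteq> 0"
  proof -
    have "(p1, p2) \<noteq> 0" using w by (auto simp: zero_prod_def)
    then have "\<forall>\<^sub>F s in G. l s /\<^sub>R norm (l s) \<noteq> 0"
      using tendsto_imp_eventually_ne[OF dir] by blast
    then show ?thesis by (rule eventually_mono) auto
  qed
  then have "\<forall>\<^sub>F s in G. sgn (V s) = (tan_u l s, tan_v l s)"
    by (rule eventually_mono) (simp add: V_def sgn_scaleR tan_eq_sgn_vector_derivative)
  ultimately show ?thesis by (rule Lim_transform_eventually)
qed

lemma abs_tan_le_one: "\<bar>tan_u l s\<bar> \<le> 1" "\<bar>tan_v l s\<bar> \<le> 1"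
proof -
  have "norm (tan_u l s, tan_v l s) \<le> 1"
    unfolding tan_eq_sgn_vector_derivative by (simp add: norm_sgn)
  then show "\<bar>tan_u l s\<bar> \<le> 1" "\<bar>tan_v l s\<bar> \<le> 1"
    using norm_fst_le[of "tan_u l s" "tan_v l s"] norm_snd_le[of "tan_v l s" "tan_u l s"] by simp_all
qed

lemma tan_measurable:
  assumes "continuous_on UNIV (\<lambda>s. vector_derivative l (at s))" "S \<in> sets lebesgue"
  shows "tan_u l \<in> borel_measurable (lebesgue_on S)" "tan_v l \<in> borel_measurable (lebesgue_on S)"
proof -
  have "(\<lambda>s. vector_derivative l (at s)) \<in> borel_measurable (lebesgue_on S)"
    using assms continuous_imp_measurable_on_sets_lebesgue continuous_on_subset by blast
  then have m: "(\<lambda>s. (tan_u l s, tan_v l s)) \<in> borel_measurable (lebesgue_on S)"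
    unfolding tan_eq_sgn_vector_derivative by measurable
  have "fst \<in> borel_measurable borel" "snd \<in> borel_measurable borel"
    by (simp_all add: borel_measurable_continuous_onI continuous_on_fst continuous_on_snd)
  from measurable_compose[OF m this(1)] measurable_compose[OF m this(2)]
  show "tan_u l \<in> borel_measurable (lebesgue_on S)" "tan_v l \<in> borel_measurable (lebesgue_on S)"
    by simp_all
qed

lemma E_fun_tendsto:
  assumes U: "open U" "(0, 0) \<in> U" and C: "C_k_on k U f" "C_k_on k U g" "1 \<le> k"
    and f0: "partial_x f (0, 0) = 0" "partial_y f (0, 0) = 0"
    and g0: "partial_x g (0, 0) = 0" "partial_y g (0, 0) = 0"
    and lim: "(l \<longlongrightarrow> (0, 0)) G"
    and tan: "((\<lambda>s. (tan_u l s, tan_v l s)) \<longlongrightarrow> (a, b)) G"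
  shows "(E_fun \<alpha> \<beta> f g l \<longlongrightarrow> b\<^sup>2 * (- \<alpha>) + a\<^sup>2 * \<beta>) G"
proof -
  have along: "((\<lambda>s. \<phi> (l s)) \<longlongrightarrow> \<phi> (0, 0)) G"
    if "continuous_on U \<phi>" for \<phi> :: "real \<times> real \<Rightarrow> real"
    using that U continuous_on_eq_continuous_at isCont_tendsto_compose lim by blast
  note fc = C_k_on_continuous_partials[OF C(1,3)] and gc = C_k_on_continuous_partials[OF C(2,3)]
  have "(E_fun \<alpha> \<beta> f g l \<longlongrightarrow> b\<^sup>2 * (- \<alpha> + partial_x f (0, 0)) + a\<^sup>2 * (\<beta> + partial_y g (0, 0))
      - a * b * (partial_y f (0, 0) + partial_x g (0, 0))) G"
    unfolding E_fun_def[abs_def] using tendsto_fst[OF tan] tendsto_snd[OF tan]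
    by (intro tendsto_intros along fc gc) simp_all
  then show ?thesis using f0 g0 by simp
qed

lemma abs_E_form_le:
  fixes a b X Y Z :: real
  assumes "\<bar>a\<bar> \<le> 1" "\<bar>b\<bar> \<le> 1"
  shows "\<bar>b\<^sup>2 * X + a\<^sup>2 * Y - a * b * Z\<bar> \<le> \<bar>X\<bar> + \<bar>Y\<bar> + \<bar>Z\<bar>"
proof -
  have "b\<^sup>2 \<le> 1" "a\<^sup>2 \<le> 1" "\<bar>a * b\<bar> \<le> 1" using assms
    by (auto simp: abs_le_square_iff[of _ 1, simplified] abs_mult intro: mult_le_one)
  then have "\<bar>b\<^sup>2 * X\<bar> \<le> \<bar>X\<bar>" "\<bar>a\<^sup>2 * Y\<bar> \<le> \<bar>Y\<bar>" "\<bar>a * b * Z\<bar> \<le> \<bar>Z\<bar>"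
    by (auto simp: abs_mult intro!: mult_left_le_one_le)
  then show ?thesis by linarith
qed

lemma E_fun_integrable_on_intervals:
  assumes lc: "continuous_on UNIV l" and vc: "continuous_on UNIV (\<lambda>s. vector_derivative l (at s))"
    and rl: "range l \<subseteq> U" and C: "C_k_on k U f" "C_k_on k U g" "1 \<le> k"
  shows "E_fun \<alpha> \<beta> f g l integrable_on {a..b}"
proof -
  have along: "continuous_on UNIV (\<lambda>s. \<phi> (l s))"
    if "continuous_on U \<phi>" for \<phi> :: "real \<times> real \<Rightarrow> real"
    using continuous_on_compose2[OF that lc] rl by auto
  note fc = C_k_on_continuous_partials[OF C(1,3)] and gc = C_k_on_continuous_partials[OF C(2,3)]
  have meas: "(\<lambda>s. \<phi> (l s)) \<in> borel_measurable (lebesgue_on {a..b})"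
    if "continuous_on U \<phi>" for \<phi> :: "real \<times> real \<Rightarrow> real"
    using continuous_imp_measurable_on_sets_lebesgue[OF continuous_on_subset[OF along[OF that]]] by simp
  define B where "B s = \<bar>- \<alpha> + partial_x f (l s)\<bar> + \<bar>\<beta> + partial_y g (l s)\<bar>
      + \<bar>partial_y f (l s) + partial_x g (l s)\<bar>" for s
  show ?thesis
  proof (rule measurable_bounded_by_integrable_imp_integrable)
    show "E_fun \<alpha> \<beta> f g l \<in> borel_measurable (lebesgue_on {a..b})"
      using tan_measurable[OF vc, of "{a..b}"] meas[OF fc(2)] meas[OF fc(3)] meas[OF gc(2)] meas[OF gc(3)]
      unfolding E_fun_def[abs_def] by simp
    have "continuous_on UNIV B"
      unfolding B_def[abs_def] by (intro continuous_intros along fc gc)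
    then show "B integrable_on {a..b}"
      by (simp add: integrable_continuous_interval continuous_on_subset)
    show "norm (E_fun \<alpha> \<beta> f g l s) \<le> B s" for s
      unfolding E_fun_def B_def real_norm_def by (intro abs_E_form_le abs_tan_le_one)
  qed simp
qed

lemma oint_eq_integral_diff:
  assumes F: "\<And>a b. F integrable_on {a..b}" and "m \<le> a" "m \<le> b"
  shows "oint a b F = integral {m..b} F - integral {m..a} F"
proof (cases "a \<le> b")
  case True
  have "integral {m..a} F + integral {a..b} F = integral {m..b} F"
    by (rule Henstock_Kurzweil_Integration.integral_combine[OF \<open>m \<le> a\<close> True F])
  then show ?thesis using True by (simp add: oint_def)
next
  case False
  then have "integral {m..b} F + integral {b..a} F = integral {m..a} F"
    using Henstock_Kurzweil_Integration.integral_combine[OF \<open>m \<le> b\<close> _ F] False by simp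
  then show ?thesis using False by (simp add: oint_def)
qed

lemma oint_add:
  assumes "\<And>a b. F integrable_on {a..b}"
  shows "oint a b F + oint b c F = oint a c F"
  using oint_eq_integral_diff[OF assms, of "min a (min b c)"] by simp

lemma isCont_oint:
  assumes F: "\<And>a b. F integrable_on {a..b}"
  shows "isCont (\<lambda>s. oint a s F) s0"
proof -
  define m where "m = min a s0 - 1"
  have "continuous_on {m..s0 + 1} (\<lambda>s. integral {m..s} F)"
    by (rule indefinite_integral_continuous_1[OF F])
  then have "isCont (\<lambda>s. integral {m..s} F - integral {m..a} F) s0"
    by (intro continuous_intros continuous_on_interior[of "{m..s0 + 1}"]) (auto simp: m_def)
  moreover have "\<forall>\<^sub>F s in nhds s0. oint a s F = integral {m..s} F - integral {m..a} F"
    using eventually_nhds_in_open[of "{m<..}" s0]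
    by (rule eventually_mono) (auto simp: m_def intro!: oint_eq_integral_diff[OF F])
  ultimately show ?thesis by (simp add: isCont_cong)
qed

lemma oint_ge_of_lower_bound:
  assumes "a \<le> b" "F integrable_on {a..b}" "\<And>x. x \<in> {a..b} \<Longrightarrow> c \<le> F x"
  shows "c * (b - a) \<le> oint a b F"
  using integral_le[OF integrable_const_ivl assms(2,3)] assms(1) by (simp add: oint_def mult.commute)

lemma oint_reversed_ge_of_upper_bound:
  assumes "b \<le> a" "F integrable_on {b..a}" "\<And>x. x \<in> {b..a} \<Longrightarrow> F x \<le> - c"
  shows "c * (a - b) \<le> oint a b F"
  using integral_le[OF assms(2) integrable_const_ivl assms(3)] assms(1)
  by (cases "a = b") (auto simp: oint_def algebra_simps)

lemma oint_ge_linear: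
  assumes F: "\<And>a b. F integrable_on {a..b}" and c: "c > 0"
    and top: "\<forall>\<^sub>F s in at_top. c \<le> F s" and bot: "\<forall>\<^sub>F s in at_bot. F s \<le> - c"
  shows "\<exists>M. \<forall>s. c * \<bar>s\<bar> - M \<le> oint 0 s F"
proof -
  obtain T1 T2 where T1: "\<And>s. s \<ge> T1 \<Longrightarrow> c \<le> F s" and T2: "\<And>s. s \<le> T2 \<Longrightarrow> F s \<le> - c"
    using top bot unfolding eventually_at_top_linorder eventually_at_bot_linorder by blast
  define T where "T = max (max T1 (- T2)) 0"
  have T: "T \<ge> 0" "\<And>s. s \<ge> T \<Longrightarrow> c \<le> F s" "\<And>s. s \<le> - T \<Longrightarrow> F s \<le> - c"
    using T1 T2 by (auto simp: T_def)
  have "continuous_on {-T..T} (\<lambda>s. oint 0 s F)"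
    using isCont_oint[OF F] by (simp add: continuous_at_imp_continuous_on)
  then obtain s0 where min: "\<And>s. s \<in> {-T..T} \<Longrightarrow> oint 0 s0 F \<le> oint 0 s F"
    using continuous_attains_inf[of "{-T..T}"] T(1) by fastforce
  have "c * \<bar>s\<bar> - (c * T - oint 0 s0 F) \<le> oint 0 s F" for s
  proof -
    consider "\<bar>s\<bar> \<le> T" | "s > T" | "s < - T" by linarith
    then show ?thesis
    proof cases
      case 1
      then have "c * \<bar>s\<bar> \<le> c * T" using c by (intro mult_left_mono) auto
      moreover have "oint 0 s0 F \<le> oint 0 s F" using 1 by (intro min) (auto simp: abs_le_iff)
      ultimately show ?thesis by linarith
    next
      case 2
      have "c * (s - T) \<le> oint T s F" using 2 T(2) by (intro oint_ge_of_lower_bound F) auto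
      then show ?thesis using 2 T(1) min[of T] oint_add[OF F, of 0 T s] by (simp add: algebra_simps)
    next
      case 3
      have "c * (- T - s) \<le> oint (- T) s F" using 3 T(3) by (intro oint_reversed_ge_of_upper_bound F) auto
      then show ?thesis using 3 T(1) min[of "- T"] oint_add[OF F, of 0 "- T" s] by (simp add: algebra_simps)
    qed
  qed
  then show ?thesis by blast
qed

lemma exp_neg_abs_absolutely_integrable:
  fixes c :: real
  assumes "c > 0"
  shows "(\<lambda>x. exp (- c * \<bar>x\<bar>)) absolutely_integrable_on UNIV"
proof -
  have "(\<lambda>x. exp (- c * x)) integrable_on {0..}"
    using assms by (rule integrable_on_exp_minus_to_infinity)
  then have "(\<lambda>x. exp (- c * \<bar>x\<bar>)) integrable_on {0..}"
    by (rule integrable_eq) simp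
  then have right: "(\<lambda>x. exp (- c * \<bar>x\<bar>)) absolutely_integrable_on {0..}"
    by (rule nonnegative_absolutely_integrable_1) simp
  then have "(\<lambda>x. exp (- c * \<bar>- x\<bar>)) absolutely_integrable_on {..0}"
    using has_absolute_integral_reflect_real[of "{..0}" "{0..}" "\<lambda>x. exp (- c * \<bar>x\<bar>)"]
    by (force simp: image_iff)
  then have "(\<lambda>x. exp (- c * \<bar>x\<bar>)) absolutely_integrable_on ({..0} \<union> {0..})"
    using right by (intro absolutely_integrable_Un) simp_all
  moreover have "{..0} \<union> {0..} = (UNIV :: real set)" by auto
  ultimately show ?thesis by simp
qed

lemma absolutely_integrable_bounded_mult_exp_decay:
  fixes A H X :: "real \<Rightarrow> real"
  assumes "A \<in> borel_measurable lebesgue" "H \<in> borel_measurable lebesgue" "X \<in> borel_measurable lebesgue"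
    and "\<And>s. \<bar>A s\<bar> \<le> M" "\<And>s. \<bar>H s\<bar> \<le> N" "\<And>s. \<bar>X s\<bar> \<le> K * exp (- c * \<bar>s\<bar>)"
    and "c > 0"
  shows "(\<lambda>s. A s * H s * X s) absolutely_integrable_on UNIV"
proof (rule measurable_bounded_by_integrable_imp_absolutely_integrable)
  show "(\<lambda>s. A s * H s * X s) \<in> borel_measurable (lebesgue_on UNIV)"
    using assms(1-3) by simp
  show "(\<lambda>s. M * N * K * exp (- c * \<bar>s\<bar>)) integrable_on UNIV"
    using integrable_cmul[OF set_lebesgue_integral_eq_integral(1)[OF exp_neg_abs_absolutely_integrable],
        of c "M * N * K"] \<open>c > 0\<close> by simp
  show "norm (A s * H s * X s) \<le> M * N * K * exp (- c * \<bar>s\<bar>)" for s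
  proof -
    have "0 \<le> M" "0 \<le> N" using assms(4,5) abs_ge_zero order_trans by blast+
    then have "\<bar>A s\<bar> * \<bar>H s\<bar> * \<bar>X s\<bar> \<le> M * N * (K * exp (- c * \<bar>s\<bar>))"
      using assms(4-6) by (intro mult_mono) auto
    then show ?thesis by (simp add: abs_mult mult.assoc)
  qed
qed simp

lemma bounded_of_tendsto_at_top_at_bot:
  fixes \<phi> :: "real \<Rightarrow> real"
  assumes "continuous_on UNIV \<phi>" "(\<phi> \<longlongrightarrow> L1) at_top" "(\<phi> \<longlongrightarrow> L2) at_bot"
  shows "\<exists>M. \<forall>s. \<bar>\<phi> s\<bar> \<le> M"
proof -
  obtain T1 T2 where T1: "\<And>s. s \<ge> T1 \<Longrightarrow> \<bar>\<phi> s - L1\<bar> < 1"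
    and T2: "\<And>s. s \<le> T2 \<Longrightarrow> \<bar>\<phi> s - L2\<bar> < 1"
    using tendstoD[OF assms(2), of 1] tendstoD[OF assms(3), of 1]
    unfolding eventually_at_top_linorder eventually_at_bot_linorder dist_real_def by auto
  obtain B where B: "\<And>s. s \<in> {T2..T1} \<Longrightarrow> \<bar>\<phi> s\<bar> \<le> B"
    using compact_imp_bounded[OF compact_continuous_image[OF continuous_on_subset[OF assms(1)]]]
    unfolding bounded_iff by (metis compact_Icc image_eqI real_norm_def subset_UNIV)
  have "\<bar>\<phi> s\<bar> \<le> max B (max (\<bar>L1\<bar> + 1) (\<bar>L2\<bar> + 1))" for s
    using T1[of s] T2[of s] B[of s] by (cases "s \<ge> T1"; cases "s \<le> T2") auto
  then show ?thesis by blast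
qed

lemma solution_continuous:
  fixes l :: "real \<Rightarrow> real \<times> real" and \<alpha> \<beta> :: real
  assumes sol: "\<And>s. (l has_vector_derivative
                 (- \<alpha> * fst (l s) + f (l s), \<beta> * snd (l s) + g (l s))) (at s)"
    and rl: "range l \<subseteq> U" and fc: "continuous_on U f" and gc: "continuous_on U g"
  shows "continuous_on UNIV l" "continuous_on UNIV (\<lambda>s. vector_derivative l (at s))"
proof -
  have lc: "continuous_on UNIV l"
    by (intro continuous_at_imp_continuous_on ballI has_vector_derivative_continuous[OF sol])
  moreover have "continuous_on UNIV (\<lambda>s. f (l s))" "continuous_on UNIV (\<lambda>s. g (l s))"
    using continuous_on_compose2[OF fc lc] continuous_on_compose2[OF gc lc] rl by auto
  ultimately show "continuous_on UNIV l" "continuous_on UNIV (\<lambda>s. vector_derivative l (at s))"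
    unfolding vector_derivative_at[OF sol] by (auto intro!: continuous_intros)
qed

lemma E_fun_tendsto_at_infinity:
  assumes ab: "0 < \<beta>" "0 < \<alpha>"
    and sol: "\<And>s. (l has_vector_derivative
                 (- \<alpha> * fst (l s) + f (l s), \<beta> * snd (l s) + g (l s))) (at s)"
    and U: "open U" "(0, 0) \<in> U" and C: "C_k_on k U f" "C_k_on k U g" "1 \<le> k"
    and f0: "f (0, 0) = 0" "partial_x f (0, 0) = 0" "partial_y f (0, 0) = 0"
    and g0: "g (0, 0) = 0" "partial_x g (0, 0) = 0" "partial_y g (0, 0) = 0"
    and lim_top: "(l \<longlongrightarrow> (0, 0)) at_top" and lim_bot: "(l \<longlongrightarrow> (0, 0)) at_bot"
    and dir_top: "((\<lambda>s. l s /\<^sub>R norm (l s)) \<longlongrightarrow> (1, 0)) at_top"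
    and dir_bot: "((\<lambda>s. l s /\<^sub>R norm (l s)) \<longlongrightarrow> (0, 1)) at_bot"
  shows "(E_fun \<alpha> \<beta> f g l \<longlongrightarrow> \<beta>) at_top" "(E_fun \<alpha> \<beta> f g l \<longlongrightarrow> - \<alpha>) at_bot"
proof -
  have "((\<lambda>s. (tan_u l s, tan_v l s)) \<longlongrightarrow> (-1, 0)) at_top"
    using unit_tangent_tendsto[OF sol U C f0 g0 lim_top dir_top] ab
    by (simp add: sgn_div_norm norm_Pair zero_prod_def)
  from E_fun_tendsto[OF U C f0(2,3) g0(2,3) lim_top this]
  show "(E_fun \<alpha> \<beta> f g l \<longlongrightarrow> \<beta>) at_top" by simp
  have "((\<lambda>s. (tan_u l s, tan_v l s)) \<longlongrightarrow> (0, 1)) at_bot"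
    using unit_tangent_tendsto[OF sol U C f0 g0 lim_bot dir_bot] ab
    by (simp add: sgn_div_norm norm_Pair zero_prod_def)
  from E_fun_tendsto[OF U C f0(2,3) g0(2,3) lim_bot this]
  show "(E_fun \<alpha> \<beta> f g l \<longlongrightarrow> - \<alpha>) at_bot" by simp
qed

lemma exp_neg_oint_exp_decay:
  assumes F: "\<And>a b. F integrable_on {a..b}" and c: "0 < c" "c < a" "b < - c"
    and top: "(F \<longlongrightarrow> a) at_top" and bot: "(F \<longlongrightarrow> b) at_bot"
  shows "\<exists>K. \<forall>s. \<bar>exp (- oint 0 s F)\<bar> \<le> K * exp (- c * \<bar>s\<bar>)"
proof -
  have "\<forall>\<^sub>F s in at_top. c \<le> F s"
    using order_tendstoD(1)[OF top \<open>c < a\<close>] by (rule eventually_mono) simp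
  moreover have "\<forall>\<^sub>F s in at_bot. F s \<le> - c"
    using order_tendstoD(2)[OF bot \<open>b < - c\<close>] by (rule eventually_mono) simp
  ultimately obtain M where M: "\<And>s. c * \<bar>s\<bar> - M \<le> oint 0 s F"
    using oint_ge_linear[OF F \<open>0 < c\<close>] by blast
  have "\<bar>exp (- oint 0 s F)\<bar> \<le> exp M * exp (- c * \<bar>s\<bar>)" for s
    using M[of s] by (simp add: exp_add[symmetric])
  then show ?thesis by blast
qed

lemma absolutely_integrable_tangent_weight:
  fixes \<alpha> \<beta> :: real and l :: "real \<Rightarrow> real \<times> real" and H :: "real \<Rightarrow> real"
  assumes ab: "0 < \<beta>" "\<beta> < \<alpha>"
    and f0: "f (0, 0) = 0" "partial_x f (0, 0) = 0" "partial_y f (0, 0) = 0"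
    and g0: "g (0, 0) = 0" "partial_x g (0, 0) = 0" "partial_y g (0, 0) = 0"
    and U: "open U" "insert (0, 0) (range l) \<subseteq> U"
    and C: "C_k_on k U f" "C_k_on k U g" "1 \<le> k"
    and sol: "\<And>s. (l has_vector_derivative
                 (- \<alpha> * fst (l s) + f (l s), \<beta> * snd (l s) + g (l s))) (at s)"
    and lim_top: "(l \<longlongrightarrow> (0, 0)) at_top" and lim_bot: "(l \<longlongrightarrow> (0, 0)) at_bot"
    and dir_top: "((\<lambda>s. l s /\<^sub>R norm (l s)) \<longlongrightarrow> (1, 0)) at_top"
    and dir_bot: "((\<lambda>s. l s /\<^sub>R norm (l s)) \<longlongrightarrow> (0, 1)) at_bot"
    and H: "continuous_on UNIV H" "\<And>s. \<bar>H s\<bar> \<le> N"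
  shows "(\<lambda>s. (tan_u l s + tan_v l s) * H s * exp (- oint 0 s (E_fun \<alpha> \<beta> f g l)))
           absolutely_integrable_on UNIV"
proof -
  define E where "E = E_fun \<alpha> \<beta> f g l"
  have U0: "(0, 0) \<in> U" and rl: "range l \<subseteq> U" using U(2) by auto
  note lc = solution_continuous[OF sol rl C_k_on_continuous_partials(1)[OF C(1,3)]
      C_k_on_continuous_partials(1)[OF C(2,3)]]
  have meas: "\<phi> \<in> borel_measurable lebesgue" if "continuous_on UNIV \<phi>" for \<phi> :: "real \<Rightarrow> real"
    using continuous_imp_measurable_on_sets_lebesgue[OF that] by simp
  have Eint: "\<And>a b. E integrable_on {a..b}"
    unfolding E_def by (rule E_fun_integrable_on_intervals[OF lc rl C])
  have "\<exists>K. \<forall>s. \<bar>exp (- oint 0 s E)\<bar> \<le> K * exp (- (\<beta>/2) * \<bar>s\<bar>)"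
    using exp_neg_oint_exp_decay[OF Eint _ _ _ E_fun_tendsto_at_infinity[OF _ _ sol U(1) U0 C
        f0 g0 lim_top lim_bot dir_top dir_bot, folded E_def], where c = "\<beta>/2"] ab by simp
  then obtain K where decay: "\<And>s. \<bar>exp (- oint 0 s E)\<bar> \<le> K * exp (- (\<beta>/2) * \<bar>s\<bar>)"
    by blast
  have "(\<lambda>s. exp (- oint 0 s E)) \<in> borel_measurable lebesgue"
    using isCont_oint[OF Eint] by (intro meas continuous_intros continuous_at_imp_continuous_on) auto
  moreover have "(\<lambda>s. tan_u l s + tan_v l s) \<in> borel_measurable lebesgue"
    using tan_measurable[OF lc(2), of UNIV] by simp
  moreover have "\<bar>tan_u l s + tan_v l s\<bar> \<le> 2" for s
    using abs_tan_le_one[of l s] by linarith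
  ultimately show ?thesis
    unfolding E_def[symmetric] using ab
    by (intro absolutely_integrable_bounded_mult_exp_decay[OF _ meas[OF H(1)] _ _ H(2) decay]) auto
qed

theorem lemma3:
  fixes \<alpha> \<beta> \<omega> :: real
    and f g h :: "real \<times> real \<Rightarrow> real"
    and l :: "real \<Rightarrow> real \<times> real"
    and U :: "(real \<times> real) set"
  assumes ab: "0 < \<beta>" "\<beta> < \<alpha>"
    and f_an: "real_analytic_at2 f (0, 0)" and g_an: "real_analytic_at2 g (0, 0)"
    and f0: "f (0, 0) = 0" "partial_x f (0, 0) = 0" "partial_y f (0, 0) = 0"
    and g0: "g (0, 0) = 0" "partial_x g (0, 0) = 0" "partial_y g (0, 0) = 0"
    and U: "open U" "insert (0, 0) (range l) \<subseteq> U"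
    and f_C4: "C_k_on 4 U f" and g_C4: "C_k_on 4 U g"
    and h_cont: "continuous_on U h"
    and sol: "\<And>s. (l has_vector_derivative
                 (- \<alpha> * fst (l s) + f (l s), \<beta> * snd (l s) + g (l s))) (at s)"
    and lim_top: "(l \<longlongrightarrow> (0, 0)) at_top"
    and lim_bot: "(l \<longlongrightarrow> (0, 0)) at_bot"
    and dir_top: "((\<lambda>s. l s /\<^sub>R norm (l s)) \<longlongrightarrow> (1, 0)) at_top"
    and dir_bot: "((\<lambda>s. l s /\<^sub>R norm (l s)) \<longlongrightarrow> (0, 1)) at_bot"
  shows "(\<lambda>s. (tan_u l s + tan_v l s) * h (l s) * exp (- oint 0 s (E_fun \<alpha> \<beta> f g l))) absolutely_integrable_on UNIV
       \<and> (\<lambda>s. (tan_u l s + tan_v l s) * cos (\<omega> * s) * exp (- oint 0 s (E_fun \<alpha> \<beta> f g l))) absolutely_integrable_on UNIV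
       \<and> (\<lambda>s. (tan_u l s + tan_v l s) * sin (\<omega> * s) * exp (- oint 0 s (E_fun \<alpha> \<beta> f g l))) absolutely_integrable_on UNIV"
proof -
  have U0: "(0, 0) \<in> U" and rl: "range l \<subseteq> U" and k: "1 \<le> (4::nat)" using U(2) by auto
  have hc: "continuous_on UNIV (\<lambda>s. h (l s))"
    using continuous_on_compose2[OF h_cont solution_continuous(1)[OF sol rl]] rl
      C_k_on_continuous_partials(1)[OF f_C4 k] C_k_on_continuous_partials(1)[OF g_C4 k] by auto
  obtain N where N: "\<And>s. \<bar>h (l s)\<bar> \<le> N"
    using bounded_of_tendsto_at_top_at_bot[OF hc] U(1) U0 h_cont lim_top lim_bot
    by (metis continuous_on_eq_continuous_at isCont_tendsto_compose)
  note weighted = absolutely_integrable_tangent_weight[OF ab f0 g0 U f_C4 g_C4 k sol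
      lim_top lim_bot dir_top dir_bot]
  show ?thesis
    by (intro conjI weighted[OF hc N] weighted[OF _ abs_cos_le_one]
        weighted[OF _ abs_sin_le_one] continuous_intros)
qed

end
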